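(* Consider the control system $\dot x=f(d,x)+g(x)u$, $x\in\mathbb{R}^n$, $u\in U\subseteq\mathbb{R}$, $d\in D$, with $D\subseteq\mathbb{R}^l$ compact, $f,g$ continuous, $f(d,0)=0$ for all $d\in D$, satisfying (H) and one of (P1), (P2), (P3). Suppose that $V_1,\dots,V_k\in C^1(\mathbb{R}^n;\mathbb{R}_+)$ is a VRCLF for this system, with associated data $\eta,W,\delta,K,\gamma_{i,j},\rho,\varepsilon$ (and $A,\kappa,\nu$ in property (vi)). Then there exist functions $\tilde\gamma_{i,j}\in\mathcal{N}_1$, $i,j=1,\dots,k$, with $\tilde\gamma_{i,i}\equiv0$, such that for $i\ne j$ each $\tilde\gamma_{i,j}$ is positive definite and satisfies $\lim_{s\to+\infty}\tilde\gamma_{i,j}(s)=+\infty$, and such that all properties of the definition of the VRCLF (for the same case (P1), (P2) or (P3)) hold with $\tilde\gamma_{i,j}$ in place of $\gamma_{i,j}$ (and the same remaining data).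
   Context: Notation: $\mathbb{R}_+=[0,+\infty)$. A function $\gamma:\mathbb{R}_+\to\mathbb{R}_+$ is of class $\mathcal{N}_1$ if it is continuous, non-decreasing and $\gamma(0)=0$; of class $\mathcal{K}_\infty$ if it is continuous, increasing, $\gamma(0)=0$ and $\gamma(s)\to+\infty$ as $s\to+\infty$. A function $\rho:\mathbb{R}_+\to\mathbb{R}_+$ is positive definite if $\rho(0)=0$ and $\rho(s)>0$ for $s>0$. A continuous $W:\mathbb{R}^n\to\mathbb{R}$ is radially unbounded if for every $M>0$ the set $\{x: W(x)\le M\}$ is compact or empty. For a $C^1$ function $V:\mathbb{R}^n\to\mathbb{R}$, $\nabla V(x)$ denotes its (row) gradient, $L_gV(x):=\nabla V(x)g(x)$ and $\max_{d\in D}L_fV(x):=\max_{d\in D}\nabla V(x)f(d,x)$. Hypothesis (H): there exists a symmetric positive definite matrix $P\in\mathbb{R}^{n\times n}$ such that for every bounded $S\subset\mathbb{R}^n\times\mathbb{R}$ there is $L\ge0$ with $(x-y)'P\big(f(d,x)+g(x)u-f(d,y)-g(y)u\big)\le L|x-y|^2$ for all $(x,u),(y,u)\in S$ and all $d\in D$. Control sets: (P1) $U=\mathbb{R}$; (P2) $U=[-a,+\infty)$ for some constant $a\ge0$; (P3) $U=[-a,b]$ for some constants $a,b\ge0$. Small-gain conditions for functions $\gamma_{i,j}$, $i,j=1,\dots,k$: for each $r=2,\dots,k$ and all pairwise distinct $i_1,\dots,i_r\in\{1,\dots,k\}$, $(\gamma_{i_1,i_2}\circ\gamma_{i_2,i_3}\circ\cdots\circ\gamma_{i_r,i_1})(s)<s$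 for all $s>0$. Definition (VRCLF). Under (H),(P1), a family $V_1,\dots,V_k\in C^1(\mathbb{R}^n;\mathbb{R}_+)$ is a VRCLF if there exist $\eta\in C^1(\mathbb{R}^n;\mathbb{R})$ with $\eta(0)<0$, a radially unbounded $W\in C^1(\mathbb{R}^n;[1,+\infty))$, $\delta\in C^0(\mathbb{R}_+;(0,+\infty))$, a non-decreasing $K\in C^0(\mathbb{R}_+;[1,+\infty))$, functions $\gamma_{i,j}\in\mathcal{N}_1$ ($i,j=1,\dots,k$) with $\gamma_{i,i}\equiv0$, a continuous positive definite $\rho:\mathbb{R}_+\to\mathbb{R}_+$ and a constant $\varepsilon>0$ such that: (i) there exist $a_1,a_2\in\mathcal{K}_\infty$ with $a_1(|x|)\le\max_{i}V_i(x)\le a_2(|x|)$ for all $x\in\mathbb{R}^n$; (ii) for all $x$ with $\eta(x)\le\varepsilon$ and all $i,j$: if $\max_{s}\gamma_{i,s}(V_s(x))\le V_i(x)$ and $L_gV_i(x)=0$, then $\max_{d\in D}L_fV_i(x)+\rho(V_i(x))\le0$; if $\max_s\gamma_{i,s}(V_s(x))\le V_i(x)$, $\max_s\gamma_{j,s}(V_s(x))\le V_j(x)$ and $L_gV_i(x)L_gV_j(x)<0$, then $\max_{d}L_fV_i(x)+\rho(V_i(x))\le\frac{L_gV_i(x)}{L_gV_j(x)}\big(\max_dL_fV_j(x)+\rho(V_j(x))\big)$; (iii) for all $x$ with $\eta(x)\ge0$: if $L_g\eta(x)=0$ then $\max_dL_f\eta(x)+\delta(\eta(x))\le0$; if $L_gW(x)=0$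 then $\max_dL_fW(x)-K(\eta(x))W(x)\le0$; if $L_g\eta(x)L_gW(x)<0$ then $\max_dL_f\eta(x)+\delta(\eta(x))\le\frac{L_g\eta(x)}{L_gW(x)}\big(\max_dL_fW(x)-K(\eta(x))W(x)\big)$; (iv) for all $x$ with $0\le\eta(x)\le\varepsilon$ and all $j$: if $\max_s\gamma_{j,s}(V_s(x))\le V_j(x)$ and $L_g\eta(x)L_gV_j(x)<0$ then $\max_dL_f\eta(x)+\delta(\eta(x))\le\frac{L_g\eta(x)}{L_gV_j(x)}\big(\max_dL_fV_j(x)+\rho(V_j(x))\big)$; if $\max_s\gamma_{j,s}(V_s(x))\le V_j(x)$ and $L_gW(x)L_gV_j(x)<0$ then $\max_dL_fW(x)-K(\eta(x))W(x)\le\frac{L_gW(x)}{L_gV_j(x)}\big(\max_dL_fV_j(x)+\rho(V_j(x))\big)$; (v) the functions $\gamma_{i,j}$ satisfy the small-gain conditions; (vi) there exist an open set $A\subseteq\mathbb{R}^n$ with $0\in A$ and a locally Lipschitz $\kappa\in C^{\nu}(A;U)$, $\nu\in\{0,1,2,\dots\}\cup\{\infty\}$, with $\kappa(0)=0$, such that for all $i$ and all $x\in A$ with $\max_j\gamma_{i,j}(V_j(x))\le V_i(x)$: $\max_dL_fV_i(x)+L_gV_i(x)\kappa(x)\le-\rho(V_i(x))$. Under (H),(P2) a VRCLF must satisfy (i)–(vi) and also (vii): for all $x$ and $i$: if $\max_s\gamma_{i,s}(V_s(x))\le V_i(x)$, $\eta(x)\le\varepsilon$ and $L_gV_i(x)>0$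 then $\max_dL_fV_i(x)+\rho(V_i(x))-aL_gV_i(x)<0$; if $\eta(x)\ge0$ and $L_g\eta(x)>0$ then $\max_dL_f\eta(x)+\delta(\eta(x))-aL_g\eta(x)<0$; if $\eta(x)\ge0$ and $L_gW(x)>0$ then $\max_dL_fW(x)-K(\eta(x))W(x)-aL_gW(x)<0$. Under (H),(P3) a VRCLF must satisfy (i)–(vii) and also (viii): for all $x$ and $i$: if $\max_s\gamma_{i,s}(V_s(x))\le V_i(x)$, $\eta(x)\le\varepsilon$ and $L_gV_i(x)<0$ then $\max_dL_fV_i(x)+\rho(V_i(x))+bL_gV_i(x)<0$; if $\eta(x)\ge0$ and $L_g\eta(x)<0$ then $\max_dL_f\eta(x)+\delta(\eta(x))+bL_g\eta(x)<0$; if $\eta(x)\ge0$ and $L_gW(x)<0$ then $\max_dL_fW(x)-K(\eta(x))W(x)+bL_gW(x)<0$. *)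

theory Defs
  imports "HOL-Analysis.Analysis" "HOL-Library.Extended_Nat"
begin

definition classN1 :: "(real \<Rightarrow> real) \<Rightarrow> bool" where
  "classN1 h \<longleftrightarrow> continuous_on {0..} h \<and> mono_on {0..} h \<and> h 0 = 0 \<and> (\<forall>s\<ge>0. h s \<ge> 0)"

definition classKinf :: "(real \<Rightarrow> real) \<Rightarrow> bool" where
  "classKinf h \<longleftrightarrow> continuous_on {0..} h \<and> strict_mono_on {0..} h \<and> h 0 = 0
     \<and> (\<forall>s\<ge>0. h s \<ge> 0) \<and> filterlim h at_top at_top"

definition posdef :: "(real \<Rightarrow> real) \<Rightarrow> bool" where
  "posdef h \<longleftrightarrow> h 0 = 0 \<and> (\<forall>s>0. h s > 0)"

definition radially_unbounded :: "('a::real_normed_vector \<Rightarrow> real) \<Rightarrow> bool" where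
  "radially_unbounded W \<longleftrightarrow> (\<forall>M>0. compact {x. W x \<le> M} \<or> {x. W x \<le> M} = {})"

fun Ck :: "nat \<Rightarrow> (real^'n) set \<Rightarrow> (real^'n \<Rightarrow> real) \<Rightarrow> bool" where
  "Ck 0 A h = continuous_on A h"
| "Ck (Suc m) A h = (continuous_on A h \<and>
     (\<forall>i. \<exists>p. (\<forall>x\<in>A. ((\<lambda>t. h (x + t *\<^sub>R axis i 1)) has_real_derivative p x) (at 0)) \<and> Ck m A p))"

definition Cnu :: "enat \<Rightarrow> (real^'n) set \<Rightarrow> (real^'n \<Rightarrow> real) \<Rightarrow> bool" where
  "Cnu nu A h = (case nu of enat m \<Rightarrow> Ck m A h | \<infinity> \<Rightarrow> (\<forall>m. Ck m A h))"

definition locally_lipschitz_on :: "(real^'n) set \<Rightarrow> (real^'n \<Rightarrow> real) \<Rightarrow> bool" where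
  "locally_lipschitz_on A h \<longleftrightarrow> (\<forall>x\<in>A. \<exists>e>0. \<exists>L. L-lipschitz_on (cball x e \<inter> A) h)"

definition lie :: "(real^'n \<Rightarrow> real) \<Rightarrow> real^'n \<Rightarrow> real^'n \<Rightarrow> real" where
  "lie V x v = frechet_derivative V (at x) v"

definition Lg :: "(real^'n \<Rightarrow> real^'n) \<Rightarrow> (real^'n \<Rightarrow> real) \<Rightarrow> real^'n \<Rightarrow> real" where
  "Lg g V x = lie V x (g x)"

definition maxLf :: "(real^'l) set \<Rightarrow> (real^'l \<Rightarrow> real^'n \<Rightarrow> real^'n) \<Rightarrow> (real^'n \<Rightarrow> real) \<Rightarrow> real^'n \<Rightarrow> real" where
  "maxLf D f V x = Sup ((\<lambda>d. lie V x (f d x)) ` D)"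

datatype ctrl = P1 | P2 real | P3 real real

definition ctrl_ok :: "ctrl \<Rightarrow> bool" where
  "ctrl_ok cs = (case cs of P1 \<Rightarrow> True | P2 a \<Rightarrow> a \<ge> 0 | P3 a b \<Rightarrow> a \<ge> 0 \<and> b \<ge> 0)"

definition ctrlset :: "ctrl \<Rightarrow> real set" where
  "ctrlset cs = (case cs of P1 \<Rightarrow> UNIV | P2 a \<Rightarrow> {-a..} | P3 a b \<Rightarrow> {-a..b})"

definition hypH :: "(real^'l) set \<Rightarrow> (real^'l \<Rightarrow> real^'n \<Rightarrow> real^'n) \<Rightarrow> (real^'n \<Rightarrow> real^'n) \<Rightarrow> bool" where
  "hypH D f g \<longleftrightarrow> (\<exists>P::real^'n^'n. transpose P = P \<and> (\<forall>v. v \<noteq> 0 \<longrightarrow> v \<bullet> (P *v v) > 0) \<and>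
     (\<forall>S::((real^'n) \<times> real) set. bounded S \<longrightarrow> (\<exists>L\<ge>0. \<forall>x y u d.
        (x, u) \<in> S \<longrightarrow> (y, u) \<in> S \<longrightarrow> d \<in> D \<longrightarrow>
        (x - y) \<bullet> (P *v (f d x + u *\<^sub>R g x - f d y - u *\<^sub>R g y)) \<le> L * (norm (x - y))\<^sup>2)))"

definition system_ok :: "(real^'l) set \<Rightarrow> (real^'l \<Rightarrow> real^'n \<Rightarrow> real^'n) \<Rightarrow> (real^'n \<Rightarrow> real^'n) \<Rightarrow> ctrl \<Rightarrow> bool" where
  "system_ok D f g cs \<longleftrightarrow> compact D \<and> continuous_on (D \<times> UNIV) (\<lambda>(d, x). f d x)
     \<and> continuous_on UNIV g \<and> (\<forall>d\<in>D. f d 0 = 0) \<and> hypH D f g \<and> ctrl_ok cs"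

fun chain :: "(nat \<Rightarrow> nat \<Rightarrow> real \<Rightarrow> real) \<Rightarrow> nat \<Rightarrow> nat list \<Rightarrow> real \<Rightarrow> real" where
  "chain gam i0 [] = id"
| "chain gam i0 [a] = gam a i0"
| "chain gam i0 (a # b # rest) = gam a b \<circ> chain gam i0 (b # rest)"

definition small_gain :: "nat \<Rightarrow> (nat \<Rightarrow> nat \<Rightarrow> real \<Rightarrow> real) \<Rightarrow> bool" where
  "small_gain k gam \<longleftrightarrow> (\<forall>is. 2 \<le> length is \<and> length is \<le> k \<and> distinct is \<and> set is \<subseteq> {1..k}
      \<longrightarrow> (\<forall>s>0. chain gam (hd is) is s < s))"

definition gate :: "nat \<Rightarrow> (nat \<Rightarrow> nat \<Rightarrow> real \<Rightarrow> real) \<Rightarrow> (nat \<Rightarrow> real^'n \<Rightarrow> real) \<Rightarrow> nat \<Rightarrow> real^'n \<Rightarrow> bool" where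
  "gate k gam V i x \<longleftrightarrow> Max ((\<lambda>s. gam i s (V s x)) ` {1..k}) \<le> V i x"

definition VRCLF_data ::
  "(real^'l) set \<Rightarrow> (real^'l \<Rightarrow> real^'n \<Rightarrow> real^'n) \<Rightarrow> (real^'n \<Rightarrow> real^'n) \<Rightarrow> ctrl \<Rightarrow>
   nat \<Rightarrow> (nat \<Rightarrow> real^'n \<Rightarrow> real) \<Rightarrow>
   (real^'n \<Rightarrow> real) \<Rightarrow> (real^'n \<Rightarrow> real) \<Rightarrow> (real \<Rightarrow> real) \<Rightarrow> (real \<Rightarrow> real) \<Rightarrow>
   (nat \<Rightarrow> nat \<Rightarrow> real \<Rightarrow> real) \<Rightarrow> (real \<Rightarrow> real) \<Rightarrow> real \<Rightarrow>
   (real^'n) set \<Rightarrow> (real^'n \<Rightarrow> real) \<Rightarrow> enat \<Rightarrow> bool" where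
  "VRCLF_data D f g cs k V \<eta> W \<delta> K gam \<rho> \<epsilon> A \<kappa> \<nu> \<longleftrightarrow>
    \<comment> \<open>regularity of the data\<close>
    (\<forall>i\<in>{1..k}. Ck 1 UNIV (V i) \<and> (\<forall>x. V i x \<ge> 0))
    \<and> Ck 1 UNIV \<eta> \<and> \<eta> 0 < 0
    \<and> Ck 1 UNIV W \<and> (\<forall>x. W x \<ge> 1) \<and> radially_unbounded W
    \<and> continuous_on {0..} \<delta> \<and> (\<forall>s\<ge>0. \<delta> s > 0)
    \<and> continuous_on {0..} K \<and> mono_on {0..} K \<and> (\<forall>s\<ge>0. K s \<ge> 1)
    \<and> (\<forall>i\<in>{1..k}. \<forall>j\<in>{1..k}. classN1 (gam i j))
    \<and> (\<forall>i\<in>{1..k}. \<forall>s\<ge>0. gam i i s = 0)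
    \<and> continuous_on {0..} \<rho> \<and> posdef \<rho> \<and> (\<forall>s\<ge>0. \<rho> s \<ge> 0)
    \<and> \<epsilon> > 0
    \<comment> \<open>(i)\<close>
    \<and> (\<exists>a1 a2. classKinf a1 \<and> classKinf a2 \<and>
         (\<forall>x. a1 (norm x) \<le> Max ((\<lambda>i. V i x) ` {1..k}) \<and> Max ((\<lambda>i. V i x) ` {1..k}) \<le> a2 (norm x)))
    \<comment> \<open>(ii)\<close>
    \<and> (\<forall>x. \<eta> x \<le> \<epsilon> \<longrightarrow> (\<forall>i\<in>{1..k}. \<forall>j\<in>{1..k}.
         (gate k gam V i x \<and> Lg g (V i) x = 0 \<longrightarrow> maxLf D f (V i) x + \<rho> (V i x) \<le> 0) \<and>
         (gate k gam V i x \<and> gate k gam V j x \<and> Lg g (V i) x * Lg g (V j) x < 0 \<longrightarrow>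
            maxLf D f (V i) x + \<rho> (V i x) \<le>
              Lg g (V i) x / Lg g (V j) x * (maxLf D f (V j) x + \<rho> (V j x)))))
    \<comment> \<open>(iii)\<close>
    \<and> (\<forall>x. \<eta> x \<ge> 0 \<longrightarrow>
         (Lg g \<eta> x = 0 \<longrightarrow> maxLf D f \<eta> x + \<delta> (\<eta> x) \<le> 0) \<and>
         (Lg g W x = 0 \<longrightarrow> maxLf D f W x - K (\<eta> x) * W x \<le> 0) \<and>
         (Lg g \<eta> x * Lg g W x < 0 \<longrightarrow> maxLf D f \<eta> x + \<delta> (\<eta> x) \<le>
            Lg g \<eta> x / Lg g W x * (maxLf D f W x - K (\<eta> x) * W x)))
    \<comment> \<open>(iv)\<close>
    \<and> (\<forall>x. 0 \<le> \<eta> x \<and> \<eta> x \<le> \<epsilon> \<longrightarrow> (\<forall>j\<in>{1..k}.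
         (gate k gam V j x \<and> Lg g \<eta> x * Lg g (V j) x < 0 \<longrightarrow>
            maxLf D f \<eta> x + \<delta> (\<eta> x) \<le> Lg g \<eta> x / Lg g (V j) x * (maxLf D f (V j) x + \<rho> (V j x))) \<and>
         (gate k gam V j x \<and> Lg g W x * Lg g (V j) x < 0 \<longrightarrow>
            maxLf D f W x - K (\<eta> x) * W x \<le> Lg g W x / Lg g (V j) x * (maxLf D f (V j) x + \<rho> (V j x)))))
    \<comment> \<open>(v)\<close>
    \<and> small_gain k gam
    \<comment> \<open>(vi)\<close>
    \<and> open A \<and> 0 \<in> A \<and> locally_lipschitz_on A \<kappa> \<and> Cnu \<nu> A \<kappa> \<and> \<kappa> ` A \<subseteq> ctrlset cs \<and> \<kappa> 0 = 0
    \<and> (\<forall>i\<in>{1..k}. \<forall>x\<in>A. gate k gam V i x \<longrightarrow>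
         maxLf D f (V i) x + Lg g (V i) x * \<kappa> x \<le> - \<rho> (V i x))
    \<comment> \<open>(vii) under (P2) and (P3)\<close>
    \<and> (\<forall>a. (cs = P2 a \<or> (\<exists>b. cs = P3 a b)) \<longrightarrow>
         (\<forall>x. \<forall>i\<in>{1..k}. gate k gam V i x \<and> \<eta> x \<le> \<epsilon> \<and> Lg g (V i) x > 0 \<longrightarrow>
            maxLf D f (V i) x + \<rho> (V i x) - a * Lg g (V i) x < 0) \<and>
         (\<forall>x. \<eta> x \<ge> 0 \<and> Lg g \<eta> x > 0 \<longrightarrow> maxLf D f \<eta> x + \<delta> (\<eta> x) - a * Lg g \<eta> x < 0) \<and>
         (\<forall>x. \<eta> x \<ge> 0 \<and> Lg g W x > 0 \<longrightarrow> maxLf D f W x - K (\<eta> x) * W x - a * Lg g W x < 0))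
    \<comment> \<open>(viii) under (P3)\<close>
    \<and> (\<forall>b. (\<exists>a. cs = P3 a b) \<longrightarrow>
         (\<forall>x. \<forall>i\<in>{1..k}. gate k gam V i x \<and> \<eta> x \<le> \<epsilon> \<and> Lg g (V i) x < 0 \<longrightarrow>
            maxLf D f (V i) x + \<rho> (V i x) + b * Lg g (V i) x < 0) \<and>
         (\<forall>x. \<eta> x \<ge> 0 \<and> Lg g \<eta> x < 0 \<longrightarrow> maxLf D f \<eta> x + \<delta> (\<eta> x) + b * Lg g \<eta> x < 0) \<and>
         (\<forall>x. \<eta> x \<ge> 0 \<and> Lg g W x < 0 \<longrightarrow> maxLf D f W x - K (\<eta> x) * W x + b * Lg g W x < 0))"

end

theory Submission
  imports Defs
begin

(* The gates "max_s gam_{i,s}(V_s x) <= V_i x" only become harder to satisfy when the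
   gains grow, so every gated condition of a VRCLF survives an enlargement of the gains.
   The whole task is therefore to enlarge the off-diagonal gains to positive definite,
   unbounded N1 functions without destroying the small-gain conditions.

   Let G >= id be an N1 function dominating all gains, Q = G^k, and choose an N1 function
   beta <= id, positive definite and unbounded, with Q (beta (Q t)) < t for t > 0; such a
   beta is the "half inverse" of Q o Q constructed below.  The new gains are
   max(gam_{i,j}, beta) for i ~= j.  A cycle of length r <= k of the new gains is bounded
   by the maximum of the old cycle (which is < s by the old small-gain condition) and
   G^r (beta (G^r s)) <= Q (beta (Q s)) < s. *)

lemma N1_mono: "classN1 h \<Longrightarrow> 0 \<le> x \<Longrightarrow> x \<le> y \<Longrightarrow> h x \<le> h y"
  by (auto simp: classN1_def mono_on_def)

lemma N1_nonneg: "classN1 h \<Longrightarrow> 0 \<le> x \<Longrightarrow> 0 \<le> h x"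
  by (auto simp: classN1_def)

lemma N1_dominating:
  assumes "finite I" and N: "\<And>i. i \<in> I \<Longrightarrow> classN1 (h i)"
  shows "\<exists>G. classN1 G \<and> (\<forall>s\<ge>0. s \<le> G s) \<and> (\<forall>i\<in>I. \<forall>s\<ge>0. h i s \<le> G s)"
proof (intro exI conjI ballI allI impI)
  define G where "G s = s + (\<Sum>i\<in>I. h i s)" for s
  have sum_h_nonneg: "0 \<le> (\<Sum>i\<in>I. h i s)" if "s \<ge> 0" for s
    using N N1_nonneg that by (intro sum_nonneg) blast
  show ge_id: "s \<le> G s" if "s \<ge> 0" for s
    using sum_h_nonneg[OF that] by (simp add: G_def)
  have "continuous_on {0..} G"
    unfolding G_def using N by (intro continuous_intros) (auto simp: classN1_def)
  moreover have "mono_on {0..} G"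
  proof (rule mono_onI)
    fix r t :: real assume "r \<in> {0..}" "t \<in> {0..}" "r \<le> t"
    then show "G r \<le> G t"
      unfolding G_def by (intro add_mono sum_mono) (auto intro: N1_mono[OF N])
  qed
  moreover have "G 0 = 0"
    using N by (simp add: G_def classN1_def)
  moreover have "0 \<le> G s" if "s \<ge> 0" for s
    using ge_id[OF that] that by linarith
  ultimately show "classN1 G"
    unfolding classN1_def by blast
  fix i and s :: real assume "i \<in> I" "s \<ge> 0"
  then have "h i s \<le> (\<Sum>i\<in>I. h i s)"
    using assms N1_nonneg by (intro member_le_sum) blast+
  then show "h i s \<le> G s" using \<open>s \<ge> 0\<close> by (simp add: G_def)
qed

lemma N1_funpow:
  assumes G: "classN1 G"
  shows "classN1 (G ^^ n)"
proof (induction n)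
  case 0
  then show ?case by (auto simp: classN1_def mono_on_def)
next
  case (Suc n)
  have "continuous_on {0..} (G \<circ> (G ^^ n))"
  proof (rule continuous_on_compose)
    show "continuous_on {0..} (G ^^ n)" using Suc by (simp add: classN1_def)
    show "continuous_on ((G ^^ n) ` {0..}) G"
      by (rule continuous_on_subset[of "{0..}"]) (use G N1_nonneg[OF Suc] in \<open>auto simp: classN1_def\<close>)
  qed
  moreover have "mono_on {0..} (G \<circ> (G ^^ n))"
  proof (rule mono_onI)
    fix r t :: real assume "r \<in> {0..}" "t \<in> {0..}" "r \<le> t"
    then show "(G \<circ> (G ^^ n)) r \<le> (G \<circ> (G ^^ n)) t"
      using N1_mono[OF G N1_nonneg[OF Suc] N1_mono[OF Suc]] by simp
  qed
  ultimately show ?case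
    using G Suc by (simp add: classN1_def comp_def)
qed

context
  fixes G :: "real \<Rightarrow> real"
  assumes G_N1: "classN1 G" and G_ge_id: "\<And>s. s \<ge> 0 \<Longrightarrow> s \<le> G s"
begin

lemma funpow_ge_id: "s \<ge> 0 \<Longrightarrow> s \<le> (G ^^ n) s"
proof (induction n)
  case (Suc n)
  then show ?case using G_ge_id[of "(G ^^ n) s"] by simp
qed simp

lemma funpow_mono_exp:
  assumes "s \<ge> 0" "m \<le> n"
  shows "(G ^^ m) s \<le> (G ^^ n) s"
proof -
  have "(G ^^ m) s \<le> (G ^^ (n - m)) ((G ^^ m) s)"
    by (rule funpow_ge_id[OF N1_nonneg[OF N1_funpow[OF G_N1] assms(1)]])
  also have "\<dots> = (G ^^ (n - m + m)) s"
    by (simp only: funpow_add comp_apply)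
  finally show ?thesis using assms(2) by simp
qed

end

subsection \<open>A half inverse of an N1 function\<close>

text \<open>For an N1 function R, half_inverse R is an N1 function with
  half_inverse R (R t) \<le> t/2; it is positive definite and unbounded.\<close>

definition half_inverse :: "(real \<Rightarrow> real) \<Rightarrow> real \<Rightarrow> real" where
  "half_inverse R y = Inf ((\<lambda>t. t/2 + max 0 (y - R t)) ` {0..})"

lemma half_inverse_le: "t \<ge> 0 \<Longrightarrow> half_inverse R y \<le> t/2 + max 0 (y - R t)"
  unfolding half_inverse_def
  by (rule cINF_lower) (auto intro: bdd_belowI2[where m=0])

lemma half_inverse_greatest:
  "(\<And>t. t \<ge> 0 \<Longrightarrow> m \<le> t/2 + max 0 (y - R t)) \<Longrightarrow> m \<le> half_inverse R y"
  unfolding half_inverse_def by (rule cINF_greatest) auto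

lemma half_inverse_nonneg: "0 \<le> half_inverse R y"
  by (rule half_inverse_greatest) auto

lemma half_inverse_at: "t \<ge> 0 \<Longrightarrow> half_inverse R (R t) \<le> t/2"
  using half_inverse_le[of t R "R t"] by simp

lemma half_inverse_le_id: "R 0 = 0 \<Longrightarrow> y \<ge> 0 \<Longrightarrow> half_inverse R y \<le> y"
  using half_inverse_le[of 0 R y] by simp

text \<open>The half inverse is monotone and 1-Lipschitz, whatever R is.\<close>

lemma half_inverse_shift: "half_inverse R y2 - \<bar>y2 - y1\<bar> \<le> half_inverse R y1"
proof (rule half_inverse_greatest)
  fix t :: real assume "t \<ge> 0"
  then have "half_inverse R y2 \<le> t/2 + max 0 (y2 - R t)" by (rule half_inverse_le)
  then show "half_inverse R y2 - \<bar>y2 - y1\<bar> \<le> t/2 + max 0 (y1 - R t)" by linarith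
qed

lemma half_inverse_mono: "y1 \<le> y2 \<Longrightarrow> half_inverse R y1 \<le> half_inverse R y2"
  by (rule half_inverse_greatest) (smt (verit) half_inverse_le)

lemma half_inverse_N1:
  assumes "R 0 = 0"
  shows "classN1 (half_inverse R)"
proof -
  have "1-lipschitz_on {0..} (half_inverse R)"
  proof (rule lipschitz_onI)
    fix x y :: real
    show "dist (half_inverse R x) (half_inverse R y) \<le> 1 * dist x y"
      using half_inverse_shift[of R x y] half_inverse_shift[of R y x]
      by (auto simp: dist_real_def abs_minus_commute)
  qed simp
  then have "continuous_on {0..} (half_inverse R)" by (rule lipschitz_on_continuous_on)
  moreover have "half_inverse R 0 = 0"
    using half_inverse_le_id[of R 0, OF assms] half_inverse_nonneg[of R 0] by simp
  ultimately show ?thesis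
    unfolding classN1_def by (auto intro: mono_onI half_inverse_mono half_inverse_nonneg)
qed

text \<open>Positivity needs continuity of R at 0: small t make R t small, large t make t/2 large.\<close>

lemma half_inverse_pos:
  assumes "classN1 R" "y > 0"
  shows "half_inverse R y > 0"
proof -
  obtain d where d: "d > 0" and small: "\<And>t. t \<ge> 0 \<Longrightarrow> t < d \<Longrightarrow> R t < y/2"
    using assms continuous_on_iff[of "{0..}" R] unfolding classN1_def
    by (metis (no_types, lifting) atLeast_iff dist_real_def diff_zero abs_of_nonneg
        abs_less_iff half_gt_zero order_refl)
  have "min (y/2) (d/2) \<le> half_inverse R y"
  proof (rule half_inverse_greatest)
    fix t :: real assume "t \<ge> 0"
    then show "min (y/2) (d/2) \<le> t/2 + max 0 (y - R t)"
      using small[of t] by (cases "t < d") auto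
  qed
  then show ?thesis using assms(2) d by linarith
qed

text \<open>Unboundedness needs monotonicity of R: once y exceeds R (2Z) + Z, every term is at least Z.\<close>

lemma half_inverse_unbounded:
  assumes "classN1 R"
  shows "filterlim (half_inverse R) at_top at_top"
  unfolding filterlim_at_top eventually_at_top_linorder
proof (intro allI exI impI)
  fix Z y :: real assume y: "y \<ge> R (2 * \<bar>Z\<bar>) + \<bar>Z\<bar>"
  have "\<bar>Z\<bar> \<le> half_inverse R y"
  proof (rule half_inverse_greatest)
    fix t :: real assume "t \<ge> 0"
    then show "\<bar>Z\<bar> \<le> t/2 + max 0 (y - R t)"
      using y N1_mono[OF assms, of t "2 * \<bar>Z\<bar>"] by (cases "t \<le> 2 * \<bar>Z\<bar>") auto
  qed
  then show "Z \<le> half_inverse R y" by linarith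
qed

text \<open>For every N1 function Q there is a positive definite, unbounded N1 function
  beta below the identity with Q (beta (Q t)) < t: this is the margin that keeps cycles
  through an enlarged gain contractive.\<close>

lemma contractive_companion:
  assumes Q: "classN1 Q"
  shows "\<exists>\<beta>. classN1 \<beta> \<and> (\<forall>y>0. \<beta> y > 0) \<and> filterlim \<beta> at_top at_top
           \<and> (\<forall>y\<ge>0. \<beta> y \<le> y) \<and> (\<forall>t>0. Q (\<beta> (Q t)) < t)"
proof (intro exI conjI allI impI)
  define R where "R = Q \<circ> Q"
  have R: "classN1 R"
    using N1_funpow[OF Q, of 2] by (simp add: R_def numeral_2_eq_2)
  then have R0: "R 0 = 0" by (simp add: classN1_def)
  show "classN1 (half_inverse R)" using half_inverse_N1[of R, OF R0] .
  show "half_inverse R y > 0" if "y > 0" for y using half_inverse_pos[OF R that] .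
  show "filterlim (half_inverse R) at_top at_top" using half_inverse_unbounded[OF R] .
  show "half_inverse R y \<le> y" if "y \<ge> 0" for y using half_inverse_le_id[of R, OF R0 that] .
  fix t :: real assume t: "t > 0"
  show "Q (half_inverse R (Q t)) < t"
  proof (rule ccontr)
    define u where "u = half_inverse R (Q t)"
    assume "\<not> Q u < t"
    then have "Q t \<le> R u"
      using N1_mono[OF Q] t by (simp add: R_def)
    then have "u \<le> half_inverse R (R u)"
      unfolding u_def by (rule half_inverse_mono)
    also have "\<dots> \<le> u/2"
      using half_inverse_at half_inverse_nonneg u_def by blast
    finally have "u = 0" using half_inverse_nonneg[of R "Q t"] u_def by linarith
    with \<open>\<not> Q u < t\<close> t Q show False by (simp add: classN1_def)
  qed
qed

subsection \<open>Cycles of gains\<close>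

lemma chain_Cons: "chain gam iz (a # l) = gam a (hd (l @ [iz])) \<circ> chain gam iz l"
  by (cases l) auto

lemma chain_hd_in:
  "set l \<subseteq> S \<Longrightarrow> iz \<in> S \<Longrightarrow> hd (l @ [iz]) \<in> S"
  by (cases l) auto

lemma chain_nonneg:
  assumes "\<And>a b w. a \<in> S \<Longrightarrow> b \<in> S \<Longrightarrow> w \<ge> 0 \<Longrightarrow> 0 \<le> gam a b w"
  shows "set l \<subseteq> S \<Longrightarrow> iz \<in> S \<Longrightarrow> s \<ge> 0 \<Longrightarrow> 0 \<le> chain gam iz l s"
proof (induction l)
  case (Cons a l)
  have "0 \<le> gam a (hd (l @ [iz])) (chain gam iz l s)"
    by (rule assms) (use Cons chain_hd_in in auto)
  then show ?case by (simp add: chain_Cons)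
qed simp

lemma chain_le_funpow:
  assumes G: "classN1 G"
    and gam: "\<And>a b w. a \<in> S \<Longrightarrow> b \<in> S \<Longrightarrow> w \<ge> 0 \<Longrightarrow> 0 \<le> gam a b w \<and> gam a b w \<le> G w"
  shows "set l \<subseteq> S \<Longrightarrow> iz \<in> S \<Longrightarrow> s \<ge> 0 \<Longrightarrow> chain gam iz l s \<le> (G ^^ length l) s"
proof (induction l)
  case (Cons a l)
  let ?v = "chain gam iz l s"
  have l: "set l \<subseteq> S" and a: "a \<in> S" using Cons.prems by auto
  have b: "hd (l @ [iz]) \<in> S" using chain_hd_in[OF l Cons.prems(2)] .
  have v0: "0 \<le> ?v"
    by (rule chain_nonneg[OF _ l Cons.prems(2,3)]) (use gam in blast)
  have "gam a (hd (l @ [iz])) ?v \<le> G ?v" using gam[OF a b v0] by simp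
  also have "\<dots> \<le> G ((G ^^ length l) s)"
    using N1_mono[OF G v0 Cons.IH[OF l Cons.prems(2,3)]] .
  finally show ?case by (simp add: chain_Cons)
qed simp

lemma chain_max_bound:
  fixes gam gt :: "nat \<Rightarrow> nat \<Rightarrow> real \<Rightarrow> real"
  assumes G: "classN1 G" "\<And>s. s \<ge> 0 \<Longrightarrow> s \<le> G s"
    and \<beta>: "classN1 \<beta>" "\<And>y. y \<ge> 0 \<Longrightarrow> \<beta> y \<le> y"
    and gam: "\<And>a b. a \<in> S \<Longrightarrow> b \<in> S \<Longrightarrow> classN1 (gam a b)"
      "\<And>a b w. a \<in> S \<Longrightarrow> b \<in> S \<Longrightarrow> w \<ge> 0 \<Longrightarrow> gam a b w \<le> G w"
    and gt: "\<And>a b w. a \<in> S \<Longrightarrow> b \<in> S \<Longrightarrow> w \<ge> 0 \<Longrightarrow> 0 \<le> gt a b w \<and> gt a b w \<le> max (gam a b w) (\<beta> w)"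
    and S: "set l \<subseteq> S" "iz \<in> S" and s: "s \<ge> 0"
  shows "chain gt iz l s \<le> max (chain gam iz l s) ((G ^^ length l) (\<beta> ((G ^^ length l) s)))"
  using S
proof (induction l)
  case Nil
  then show ?case by simp
next
  case (Cons a l)
  define C where "C n = (G ^^ n) (\<beta> ((G ^^ n) s))" for n
  define n where "n = length l"
  define b where "b = hd (l @ [iz])"
  define w where "w = chain gt iz l s"
  define v where "v = chain gam iz l s"
  have l: "set l \<subseteq> S" using Cons.prems by simp
  have ab: "a \<in> S" "b \<in> S" using Cons.prems chain_hd_in[OF l] by (simp_all add: b_def)
  have w0: "0 \<le> w" unfolding w_def
    by (rule chain_nonneg[OF _ l Cons.prems(2) s]) (rule conjunct1[OF gt])
  have v0: "0 \<le> v" unfolding v_def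
    by (rule chain_nonneg[OF _ l Cons.prems(2) s]) (rule N1_nonneg[OF gam(1)])
  have v_le: "v \<le> (G ^^ n) s" unfolding v_def n_def
    by (rule chain_le_funpow[OF G(1) _ l Cons.prems(2) s]) (intro conjI N1_nonneg[OF gam(1)] gam(2))
  have iter_nonneg: "0 \<le> (G ^^ m) s" for m using N1_nonneg[OF N1_funpow[OF G(1)] s] .
  have \<beta>_iter_nonneg: "0 \<le> \<beta> ((G ^^ m) s)" for m using N1_nonneg[OF \<beta>(1) iter_nonneg] .
  have \<beta>_iter_mono: "\<beta> ((G ^^ m) s) \<le> \<beta> ((G ^^ m') s)" if "m \<le> m'" for m m'
    using N1_mono[OF \<beta>(1) iter_nonneg funpow_mono_exp[OF G s that]] .
  have C_mono: "C m \<le> C m'" if "m \<le> m'" for m m'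
  proof -
    have "C m \<le> (G ^^ m) (\<beta> ((G ^^ m') s))"
      unfolding C_def by (rule N1_mono[OF N1_funpow[OF G(1)] \<beta>_iter_nonneg \<beta>_iter_mono[OF that]])
    also have "\<dots> \<le> C m'"
      unfolding C_def by (rule funpow_mono_exp[OF G \<beta>_iter_nonneg that])
    finally show ?thesis .
  qed
  have \<beta>_iter: "\<beta> ((G ^^ m) s) \<le> C m" for m
    unfolding C_def by (rule funpow_ge_id[OF G \<beta>_iter_nonneg])
  have G_C: "G (C n) \<le> C (Suc n)"
  proof -
    have "G (C n) = (G ^^ Suc n) (\<beta> ((G ^^ n) s))" by (simp add: C_def)
    also have "\<dots> \<le> C (Suc n)"
      unfolding C_def
      by (rule N1_mono[OF N1_funpow[OF G(1)] \<beta>_iter_nonneg \<beta>_iter_mono[OF le_SucI[OF order_refl]]])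
    finally show ?thesis .
  qed
  have IH: "w \<le> max v (C n)" using Cons.IH Cons.prems l by (simp add: w_def v_def n_def C_def)
  have "gt a b w \<le> max (gam a b v) (C (Suc n))"
  proof (cases "w \<le> v")
    case True
    have "\<beta> w \<le> C (Suc n)"
      using N1_mono[OF \<beta>(1) w0 True] N1_mono[OF \<beta>(1) v0 v_le] \<beta>_iter[of n] C_mono[of n "Suc n"]
      by linarith
    then show ?thesis
      using gt[OF ab w0] N1_mono[OF gam(1)[OF ab] w0 True] by linarith
  next
    case False
    then have wC: "w \<le> C n" using IH by linarith
    have "gam a b w \<le> C (Suc n)"
      using gam(2)[OF ab w0] N1_mono[OF G(1) w0 wC] G_C by linarith
    moreover have "\<beta> w \<le> C (Suc n)"
      using \<beta>(2)[OF w0] wC C_mono[of n "Suc n"] by linarith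
    ultimately show ?thesis using gt[OF ab w0] by linarith
  qed
  then show ?case by (simp add: chain_Cons C_def n_def b_def w_def v_def)
qed

lemma small_gain_enlarge:
  fixes gam gt :: "nat \<Rightarrow> nat \<Rightarrow> real \<Rightarrow> real"
  assumes sg: "small_gain k gam"
    and G: "classN1 G" "\<And>s. s \<ge> 0 \<Longrightarrow> s \<le> G s"
    and \<beta>: "classN1 \<beta>" "\<And>y. y \<ge> 0 \<Longrightarrow> \<beta> y \<le> y"
    and margin: "\<And>t. t > 0 \<Longrightarrow> (G ^^ k) (\<beta> ((G ^^ k) t)) < t"
    and gam: "\<And>a b. a \<in> {1..k} \<Longrightarrow> b \<in> {1..k} \<Longrightarrow> classN1 (gam a b)"
      "\<And>a b w. a \<in> {1..k} \<Longrightarrow> b \<in> {1..k} \<Longrightarrow> w \<ge> 0 \<Longrightarrow> gam a b w \<le> G w"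
    and gt: "\<And>a b w. a \<in> {1..k} \<Longrightarrow> b \<in> {1..k} \<Longrightarrow> w \<ge> 0 \<Longrightarrow>
               0 \<le> gt a b w \<and> gt a b w \<le> max (gam a b w) (\<beta> w)"
  shows "small_gain k gt"
  unfolding small_gain_def
proof (intro allI impI)
  fix js :: "nat list" and s :: real
  assume cyc: "2 \<le> length js \<and> length js \<le> k \<and> distinct js \<and> set js \<subseteq> {1..k}" and s: "s > 0"
  let ?r = "length js"
  have hd: "hd js \<in> {1..k}" using cyc by (cases js) auto
  have old: "chain gam (hd js) js s < s" using sg cyc s unfolding small_gain_def by blast
  have s0: "0 \<le> s" using s by simp
  have r_le: "?r \<le> k" using cyc by simp
  have iter_nonneg: "0 \<le> (G ^^ m) s" for m using N1_nonneg[OF N1_funpow[OF G(1)] s0] .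
  have "\<beta> ((G ^^ ?r) s) \<le> \<beta> ((G ^^ k) s)"
    by (rule N1_mono[OF \<beta>(1) iter_nonneg funpow_mono_exp[OF G s0 r_le]])
  then have "(G ^^ ?r) (\<beta> ((G ^^ ?r) s)) \<le> (G ^^ ?r) (\<beta> ((G ^^ k) s))"
    by (rule N1_mono[OF N1_funpow[OF G(1)] N1_nonneg[OF \<beta>(1) iter_nonneg]])
  also have "\<dots> \<le> (G ^^ k) (\<beta> ((G ^^ k) s))"
    by (rule funpow_mono_exp[OF G N1_nonneg[OF \<beta>(1) iter_nonneg] r_le])
  also have "\<dots> < s" using margin[OF s] .
  finally have "(G ^^ ?r) (\<beta> ((G ^^ ?r) s)) < s" .
  moreover have "chain gt (hd js) js s \<le> max (chain gam (hd js) js s) ((G ^^ ?r) (\<beta> ((G ^^ ?r) s)))"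
    using cyc hd s0
    by (intro chain_max_bound[where G=G and \<beta>=\<beta> and S="{1..k}" and gam=gam and gt=gt, OF G \<beta> gam gt]) auto
  ultimately show "chain gt (hd js) js s < s" using old by linarith
qed

lemma enlarged_gain:
  assumes gam: "classN1 gam" and \<beta>: "classN1 \<beta>" "\<forall>y>0. \<beta> y > 0" "filterlim \<beta> at_top at_top"
  shows "classN1 (\<lambda>s. max (gam s) (\<beta> s))" and "posdef (\<lambda>s. max (gam s) (\<beta> s))"
    and "filterlim (\<lambda>s. max (gam s) (\<beta> s)) at_top at_top"
proof -
  have "continuous_on {0..} (\<lambda>s. max (gam s) (\<beta> s))"
    using gam \<beta>(1) unfolding classN1_def by (intro continuous_on_max) simp_all
  moreover have "mono_on {0..} (\<lambda>s. max (gam s) (\<beta> s))"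
  proof (rule mono_onI)
    fix r t :: real assume "r \<in> {0..}" "t \<in> {0..}" and le: "r \<le> t"
    then have r0: "0 \<le> r" by simp
    show "max (gam r) (\<beta> r) \<le> max (gam t) (\<beta> t)"
      by (rule max.mono[OF N1_mono[OF gam r0 le] N1_mono[OF \<beta>(1) r0 le]])
  qed
  moreover have zero: "max (gam 0) (\<beta> 0) = 0"
    using gam \<beta>(1) by (simp add: classN1_def)
  moreover have "0 \<le> max (gam s) (\<beta> s)" if "0 \<le> s" for s
    using N1_nonneg[OF gam that] by simp
  ultimately show "classN1 (\<lambda>s. max (gam s) (\<beta> s))"
    unfolding classN1_def by blast
  show "posdef (\<lambda>s. max (gam s) (\<beta> s))"
    using zero \<beta>(2) by (simp add: posdef_def less_max_iff_disj)
  show "filterlim (\<lambda>s. max (gam s) (\<beta> s)) at_top at_top"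
    by (rule filterlim_at_top_mono[OF \<beta>(3)]) simp
qed

lemma gains_enlargement:
  fixes gam :: "nat \<Rightarrow> nat \<Rightarrow> real \<Rightarrow> real"
  assumes gam_N1: "\<forall>i\<in>{1..k}. \<forall>j\<in>{1..k}. classN1 (gam i j)"
    and gam_diag: "\<forall>i\<in>{1..k}. \<forall>s\<ge>0. gam i i s = 0"
    and gam_sg: "small_gain k gam"
  shows "\<exists>gt. (\<forall>i\<in>{1..k}. \<forall>j\<in>{1..k}. classN1 (gt i j))
         \<and> (\<forall>i\<in>{1..k}. \<forall>s\<ge>0. gt i i s = 0)
         \<and> (\<forall>i\<in>{1..k}. \<forall>j\<in>{1..k}. i \<noteq> j \<longrightarrow> posdef (gt i j) \<and> filterlim (gt i j) at_top at_top)
         \<and> small_gain k gt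
         \<and> (\<forall>i\<in>{1..k}. \<forall>j. \<forall>s\<ge>0. gam i j s \<le> gt i j s)"
proof -
  have "\<exists>G. classN1 G \<and> (\<forall>s\<ge>0. s \<le> G s) \<and> (\<forall>ij\<in>{1..k} \<times> {1..k}. \<forall>s\<ge>0. case_prod gam ij s \<le> G s)"
    by (rule N1_dominating) (use gam_N1 in auto)
  then obtain G where G: "classN1 G" "\<And>s. s \<ge> 0 \<Longrightarrow> s \<le> G s"
    and G_dom: "\<forall>ij\<in>{1..k} \<times> {1..k}. \<forall>s\<ge>0. case_prod gam ij s \<le> G s"
    by blast
  have G_gam: "gam i j s \<le> G s" if "i \<in> {1..k}" "j \<in> {1..k}" "s \<ge> 0" for i j s
    using G_dom that by simp
  obtain \<beta> where \<beta>: "classN1 \<beta>" "\<forall>y>0. \<beta> y > 0" "filterlim \<beta> at_top at_top"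
    and \<beta>_le: "\<And>y. y \<ge> 0 \<Longrightarrow> \<beta> y \<le> y" and margin: "\<And>t. t > 0 \<Longrightarrow> (G ^^ k) (\<beta> ((G ^^ k) t)) < t"
    using contractive_companion[OF N1_funpow[OF G(1)], of k] by blast
  define gt where "gt i j s = (if i = j then 0 else max (gam i j s) (\<beta> s))" for i j s
  have gt_off: "gt i j = (\<lambda>s. max (gam i j s) (\<beta> s))" if "i \<noteq> j" for i j
    using that by (simp add: gt_def fun_eq_iff)
  have gt_diag: "\<forall>i\<in>{1..k}. \<forall>s\<ge>0. gt i i s = 0" by (simp add: gt_def)
  have gt_N1: "\<forall>i\<in>{1..k}. \<forall>j\<in>{1..k}. classN1 (gt i j)"
  proof (intro ballI)
    fix i j assume ij: "i \<in> {1..k}" "j \<in> {1..k}"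
    show "classN1 (gt i j)"
      using enlarged_gain(1)[OF gam_N1[rule_format, OF ij] \<beta>] gt_off
      by (cases "i = j") (auto simp: gt_def classN1_def mono_on_def)
  qed
  have gt_enlarged: "\<forall>i\<in>{1..k}. \<forall>j\<in>{1..k}. i \<noteq> j \<longrightarrow> posdef (gt i j) \<and> filterlim (gt i j) at_top at_top"
    using gam_N1 enlarged_gain(2,3)[OF _ \<beta>] gt_off by simp
  have gt_ge: "gam i j s \<le> gt i j s" if "i \<in> {1..k}" "s \<ge> 0" for i j s
    using that gam_diag by (simp add: gt_def)
  have gt_bounds: "0 \<le> gt i j s \<and> gt i j s \<le> max (gam i j s) (\<beta> s)"
    if "i \<in> {1..k}" "j \<in> {1..k}" "s \<ge> 0" for i j s
    using N1_nonneg[OF gam_N1[rule_format, OF that(1,2)] that(3)] by (auto simp: gt_def)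
  have gt_sg: "small_gain k gt"
  proof (rule small_gain_enlarge[where G=G and \<beta>=\<beta> and gam=gam])
    show "classN1 (gam i j)" if "i \<in> {1..k}" "j \<in> {1..k}" for i j using gam_N1 that by blast
  qed (fact gam_sg G \<beta>(1) \<beta>_le margin G_gam gt_bounds)+
  show ?thesis
    using gt_ge by (intro exI[of _ gt] conjI gt_N1 gt_diag gt_enlarged gt_sg) auto
qed

subsection \<open>Monotonicity of the VRCLF conditions in the gains\<close>

lemma gate_antimono:
  assumes "k \<ge> 1" and le: "\<And>s. s \<in> {1..k} \<Longrightarrow> gam i s (V s x) \<le> gt i s (V s x)"
    and "gate k gt V i x"
  shows "gate k gam V i x"
proof -
  have "Max ((\<lambda>s. gam i s (V s x)) ` {1..k}) \<le> Max ((\<lambda>s. gt i s (V s x)) ` {1..k})"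
  proof (rule Max.boundedI)
    fix y assume "y \<in> (\<lambda>s. gam i s (V s x)) ` {1..k}"
    then obtain s where s: "s \<in> {1..k}" "y = gam i s (V s x)" by blast
    then have "gt i s (V s x) \<le> Max ((\<lambda>s. gt i s (V s x)) ` {1..k})" by (intro Max_ge) auto
    with le[OF s(1)] s(2) show "y \<le> Max ((\<lambda>s. gt i s (V s x)) ` {1..k})" by linarith
  qed (use assms(1) in auto)
  then show ?thesis using assms(3) unfolding gate_def by linarith
qed

text \<open>The conditions (ii), (iv), (vi), (vii), (viii) of a VRCLF, with the gate
  "max_s gam_{i,s}(V_s x) <= V_i x" abstracted to a predicate Gate i x.\<close>

definition gated_conditions ::
  "(real^'l) set \<Rightarrow> (real^'l \<Rightarrow> real^'n \<Rightarrow> real^'n) \<Rightarrow> (real^'n \<Rightarrow> real^'n) \<Rightarrow> ctrl \<Rightarrow>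
   nat \<Rightarrow> (nat \<Rightarrow> real^'n \<Rightarrow> real) \<Rightarrow> (real^'n \<Rightarrow> real) \<Rightarrow> (real^'n \<Rightarrow> real) \<Rightarrow>
   (real \<Rightarrow> real) \<Rightarrow> (real \<Rightarrow> real) \<Rightarrow> (real \<Rightarrow> real) \<Rightarrow> real \<Rightarrow>
   (real^'n) set \<Rightarrow> (real^'n \<Rightarrow> real) \<Rightarrow> (nat \<Rightarrow> real^'n \<Rightarrow> bool) \<Rightarrow> bool" where
  "gated_conditions D f g cs k V \<eta> W \<delta> K \<rho> \<epsilon> A \<kappa> G \<longleftrightarrow>
    (\<forall>x. \<eta> x \<le> \<epsilon> \<longrightarrow> (\<forall>i\<in>{1..k}. \<forall>j\<in>{1..k}.
         (G i x \<and> Lg g (V i) x = 0 \<longrightarrow> maxLf D f (V i) x + \<rho> (V i x) \<le> 0) \<and>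
         (G i x \<and> G j x \<and> Lg g (V i) x * Lg g (V j) x < 0 \<longrightarrow>
            maxLf D f (V i) x + \<rho> (V i x) \<le>
              Lg g (V i) x / Lg g (V j) x * (maxLf D f (V j) x + \<rho> (V j x)))))
    \<and> (\<forall>x. 0 \<le> \<eta> x \<and> \<eta> x \<le> \<epsilon> \<longrightarrow> (\<forall>j\<in>{1..k}.
         (G j x \<and> Lg g \<eta> x * Lg g (V j) x < 0 \<longrightarrow>
            maxLf D f \<eta> x + \<delta> (\<eta> x) \<le> Lg g \<eta> x / Lg g (V j) x * (maxLf D f (V j) x + \<rho> (V j x))) \<and>
         (G j x \<and> Lg g W x * Lg g (V j) x < 0 \<longrightarrow>
            maxLf D f W x - K (\<eta> x) * W x \<le> Lg g W x / Lg g (V j) x * (maxLf D f (V j) x + \<rho> (V j x)))))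
    \<and> (\<forall>i\<in>{1..k}. \<forall>x\<in>A. G i x \<longrightarrow>
         maxLf D f (V i) x + Lg g (V i) x * \<kappa> x \<le> - \<rho> (V i x))
    \<and> (\<forall>a. (cs = P2 a \<or> (\<exists>b. cs = P3 a b)) \<longrightarrow>
         (\<forall>x. \<forall>i\<in>{1..k}. G i x \<and> \<eta> x \<le> \<epsilon> \<and> Lg g (V i) x > 0 \<longrightarrow>
            maxLf D f (V i) x + \<rho> (V i x) - a * Lg g (V i) x < 0) \<and>
         (\<forall>x. \<eta> x \<ge> 0 \<and> Lg g \<eta> x > 0 \<longrightarrow> maxLf D f \<eta> x + \<delta> (\<eta> x) - a * Lg g \<eta> x < 0) \<and>
         (\<forall>x. \<eta> x \<ge> 0 \<and> Lg g W x > 0 \<longrightarrow> maxLf D f W x - K (\<eta> x) * W x - a * Lg g W x < 0))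
    \<and> (\<forall>b. (\<exists>a. cs = P3 a b) \<longrightarrow>
         (\<forall>x. \<forall>i\<in>{1..k}. G i x \<and> \<eta> x \<le> \<epsilon> \<and> Lg g (V i) x < 0 \<longrightarrow>
            maxLf D f (V i) x + \<rho> (V i x) + b * Lg g (V i) x < 0) \<and>
         (\<forall>x. \<eta> x \<ge> 0 \<and> Lg g \<eta> x < 0 \<longrightarrow> maxLf D f \<eta> x + \<delta> (\<eta> x) + b * Lg g \<eta> x < 0) \<and>
         (\<forall>x. \<eta> x \<ge> 0 \<and> Lg g W x < 0 \<longrightarrow> maxLf D f W x - K (\<eta> x) * W x + b * Lg g W x < 0))"

text \<open>All gated conditions only require something where the gate holds, so they
  survive a strengthening of the gate.\<close>

lemma gated_conditions_antimono:
  assumes "gated_conditions D f g cs k V \<eta> W \<delta> K \<rho> \<epsilon> A \<kappa> G"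
    and "\<And>i x. i \<in> {1..k} \<Longrightarrow> G' i x \<Longrightarrow> G i x"
  shows "gated_conditions D f g cs k V \<eta> W \<delta> K \<rho> \<epsilon> A \<kappa> G'"
  using assms(1) unfolding gated_conditions_def
  by (elim conjE) (intro conjI allI ballI impI; (elim conjE disjE exE)?; simp add: assms(2))

lemma VRCLF_data_gated:
  "VRCLF_data D f g cs k V \<eta> W \<delta> K gam \<rho> \<epsilon> A \<kappa> \<nu> \<Longrightarrow>
   gated_conditions D f g cs k V \<eta> W \<delta> K \<rho> \<epsilon> A \<kappa> (gate k gam V)"
  unfolding VRCLF_data_def gated_conditions_def by (elim conjE) (intro conjI; assumption)

lemma VRCLF_data_regated:
  assumes "VRCLF_data D f g cs k V \<eta> W \<delta> K gam \<rho> \<epsilon> A \<kappa> \<nu>"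
    and "\<forall>i\<in>{1..k}. \<forall>j\<in>{1..k}. classN1 (gt i j)"
    and "\<forall>i\<in>{1..k}. \<forall>s\<ge>0. gt i i s = 0"
    and "small_gain k gt"
    and "gated_conditions D f g cs k V \<eta> W \<delta> K \<rho> \<epsilon> A \<kappa> (gate k gt V)"
  shows "VRCLF_data D f g cs k V \<eta> W \<delta> K gt \<rho> \<epsilon> A \<kappa> \<nu>"
  using assms unfolding VRCLF_data_def gated_conditions_def
  by (elim conjE) (intro conjI; assumption)

theorem lemma3p6:
  fixes D :: "(real^'l) set" and f :: "real^'l \<Rightarrow> real^'n \<Rightarrow> real^'n" and g :: "real^'n \<Rightarrow> real^'n"
    and cs :: ctrl and k :: nat and V :: "nat \<Rightarrow> real^'n \<Rightarrow> real"
    and \<eta> W :: "real^'n \<Rightarrow> real" and \<delta> K \<rho> :: "real \<Rightarrow> real"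
    and gam :: "nat \<Rightarrow> nat \<Rightarrow> real \<Rightarrow> real" and \<epsilon> :: real
    and A :: "(real^'n) set" and \<kappa> :: "real^'n \<Rightarrow> real" and \<nu> :: enat
  assumes "system_ok D f g cs"
    and "k \<ge> 1"
    and "VRCLF_data D f g cs k V \<eta> W \<delta> K gam \<rho> \<epsilon> A \<kappa> \<nu>"
  shows "\<exists>gt :: nat \<Rightarrow> nat \<Rightarrow> real \<Rightarrow> real.
           (\<forall>i\<in>{1..k}. \<forall>j\<in>{1..k}. classN1 (gt i j))
         \<and> (\<forall>i\<in>{1..k}. \<forall>s\<ge>0. gt i i s = 0)
         \<and> (\<forall>i\<in>{1..k}. \<forall>j\<in>{1..k}. i \<noteq> j \<longrightarrow> posdef (gt i j) \<and> filterlim (gt i j) at_top at_top)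
         \<and> VRCLF_data D f g cs k V \<eta> W \<delta> K gt \<rho> \<epsilon> A \<kappa> \<nu>"
proof -
  note data = assms(3)[unfolded VRCLF_data_def]
  have gam_N1: "\<forall>i\<in>{1..k}. \<forall>j\<in>{1..k}. classN1 (gam i j)" using data by (elim conjE) assumption
  have gam_diag: "\<forall>i\<in>{1..k}. \<forall>s\<ge>0. gam i i s = 0" using data by (elim conjE) assumption
  have gam_sg: "small_gain k gam" using data by (elim conjE) assumption
  have V_reg: "\<forall>i\<in>{1..k}. Ck 1 UNIV (V i) \<and> (\<forall>x. 0 \<le> V i x)" using data by (elim conjE) assumption
  obtain gt where gt_N1: "\<forall>i\<in>{1..k}. \<forall>j\<in>{1..k}. classN1 (gt i j)"
    and gt_diag: "\<forall>i\<in>{1..k}. \<forall>s\<ge>0. gt i i s = 0"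
    and gt_enlarged: "\<forall>i\<in>{1..k}. \<forall>j\<in>{1..k}. i \<noteq> j \<longrightarrow> posdef (gt i j) \<and> filterlim (gt i j) at_top at_top"
    and gt_sg: "small_gain k gt"
    and gt_ge: "\<forall>i\<in>{1..k}. \<forall>j. \<forall>s\<ge>0. gam i j s \<le> gt i j s"
    using gains_enlargement[OF gam_N1 gam_diag gam_sg] by blast
  have gt_gate: "gate k gam V i x" if "i \<in> {1..k}" "gate k gt V i x" for i x
    using V_reg gt_ge that(1) by (intro gate_antimono[OF assms(2) _ that(2)]) simp
  have "gated_conditions D f g cs k V \<eta> W \<delta> K \<rho> \<epsilon> A \<kappa> (gate k gt V)"
    using gated_conditions_antimono[OF VRCLF_data_gated[OF assms(3)] gt_gate] .
  then show ?thesis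
    using gt_N1 gt_diag gt_enlarged VRCLF_data_regated[OF assms(3) gt_N1 gt_diag gt_sg]
    by (intro exI[of _ gt] conjI)
qed

end
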